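(* For any constant $\gamma>0$, the map $\mathrm{Prox}_p:\mathbb{R}^n\to\mathbb{R}^n$ is $\gamma$-order semismooth on $\mathbb{R}^n$ with respect to the multifunction $\mathcal M$; that is, $\mathrm{Prox}_p$ is directionally differentiable everywhere, and for every $x\in\mathbb{R}^n$, $\mathrm{Prox}_p(x+\Delta x)-\mathrm{Prox}_p(x)-V\Delta x=O(\|\Delta x\|^{1+\gamma})$ as $\Delta x\to0$, uniformly over $V\in\mathcal M(x+\Delta x)$.
   Context: $\beta,\rho>0$; $p(x):=\beta\|x\|_1+\rho\sum_{1\le i<j\le n}|x_i-x_j|$; $\mathrm{Prox}_p(y):=\operatorname{argmin}_x\{\tfrac12\|x-y\|^2+p(x)\}$. $S_\rho(y):=\operatorname{argmin}_x\{\tfrac12\|x-y\|^2+\rho\sum_{i<j}|x_i-x_j|\}$. $w_k=n-2k+1$. $\mathcal D:=\{x: x_1\ge\cdots\ge x_n\}$, $\Pi_{\mathcal D}$ the Euclidean projection. $B\in\mathbb{R}^{(n-1)\times n}$ with $Bx=(x_1-x_2,\dots,x_{n-1}-x_n)^T$. For each $y$, $P_y$ is a fixed permutation matrix with $P_yy$ non-increasing. For $v\in\mathbb{R}^n$: $\mathcal M_{\mathcal D}(v)$ is the set of $\lambda\in\mathbb{R}^{n-1}$ with $\Pi_{\mathcal D}(v)-v+B^T\lambda=0$, $B\Pi_{\mathcal D}(v)\ge0$, $\lambda\le0$, $\lambda^TB\Pi_{\mathcal D}(v)=0$; $\mathcal I_{\mathcal D}(v):=\{i: B_i\Pi_{\mathcal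 D}(v)=0\}$; $\mathcal K_{\mathcal D}(v):=\{K:\exists\lambda\in\mathcal M_{\mathcal D}(v),\ \mathrm{supp}(\lambda)\subseteq K\subseteq\mathcal I_{\mathcal D}(v),\ B_K\text{ full row rank}\}$; $\mathcal Q_{\mathcal D}(v):=\{I_n-B_K^T(B_KB_K^T)^{-1}B_K:K\in\mathcal K_{\mathcal D}(v)\}$; $\mathcal Q_{S_\rho}(y):=\{P_y^T\widehat QP_y:\widehat Q\in\mathcal Q_{\mathcal D}(P_yy-\rho w)\}$. $\partial_B\mathrm{Prox}_{\beta\|\cdot\|_1}(\eta)$ is the set of $\mathrm{Diag}(q)$ with $q_i=0$ if $|\eta_i|<\beta$, $q_i\in\{0,1\}$ if $|\eta_i|=\beta$, $q_i=1$ otherwise. $\mathcal M(y):=\{M \text{ symmetric}: M=\Theta Q,\ \Theta\in\partial_B\mathrm{Prox}_{\beta\|\cdot\|_1}(S_\rho(y)),\ Q\in\mathcal Q_{S_\rho}(y)\}$. *)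

theory Defs
  imports "HOL-Analysis.Analysis"
begin

text \<open>Vectors of R^n are rendered as real^'n, where the index type 'n is finite and
linearly ordered (its elements are the indices 1 < 2 < ... < n, n = CARD('n)).\<close>

definition pen_p :: "real \<Rightarrow> real \<Rightarrow> real^('n::{finite,linorder}) \<Rightarrow> real" where
  "pen_p \<beta> \<rho> x = \<beta> * (\<Sum>i\<in>UNIV. \<bar>x$i\<bar>) + \<rho> * (\<Sum>(i,j)\<in>{(i,j). i < j}. \<bar>x$i - x$j\<bar>)"

definition pen_clust :: "real \<Rightarrow> real^('n::{finite,linorder}) \<Rightarrow> real" where
  "pen_clust \<rho> x = \<rho> * (\<Sum>(i,j)\<in>{(i,j). i < j}. \<bar>x$i - x$j\<bar>)"

definition prox :: "(real^('n::finite) \<Rightarrow> real) \<Rightarrow> real^'n \<Rightarrow> real^'n" where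
  "prox f y = (THE x. \<forall>z. (1/2) * (norm (x - y))^2 + f x \<le> (1/2) * (norm (z - y))^2 + f z)"

text \<open>0-based position of an index: position k (1-based) is rk i + 1.\<close>
definition rk :: "('n::{finite,linorder}) \<Rightarrow> nat" where
  "rk i = card {j. j < i}"

definition wvec :: "real^('n::{finite,linorder})" where
  "wvec = (\<chi> i. real CARD('n) - 2 * real (rk i + 1) + 1)"

definition Dset :: "(real^('n::{finite,linorder})) set" where
  "Dset = {x. \<forall>i j. i \<le> j \<longrightarrow> x$j \<le> x$i}"

definition PiD :: "real^('n::{finite,linorder}) \<Rightarrow> real^('n::{finite,linorder})" where
  "PiD v = closest_point Dset v"

text \<open>Rows of B are indexed by the non-maximal indices i; row i is e_i - e_(succ i).\<close>
definition Brows :: "('n::{finite,linorder}) set" where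
  "Brows = {i. \<exists>j. i < j}"

definition succ_idx :: "('n::{finite,linorder}) \<Rightarrow> 'n" where
  "succ_idx i = Min {j. i < j}"

definition brow :: "('n::{finite,linorder}) \<Rightarrow> real^('n::{finite,linorder})" where
  "brow i = (\<chi> j. if j = i then 1 else if j = succ_idx i then -1 else 0)"

text \<open>B^T lambda, for lambda in R^(n-1) represented as a function on Brows (zero elsewhere).\<close>
definition BT :: "(('n::{finite,linorder}) \<Rightarrow> real) \<Rightarrow> real^('n::{finite,linorder})" where
  "BT lam = (\<Sum>i\<in>Brows. lam i *\<^sub>R brow i)"

definition MD :: "real^('n::{finite,linorder}) \<Rightarrow> (('n::{finite,linorder}) \<Rightarrow> real) set" where
  "MD v = {lam. (\<forall>i. i \<notin> Brows \<longrightarrow> lam i = 0) \<and>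
       PiD v - v + BT lam = 0 \<and>
       (\<forall>i\<in>Brows. brow i \<bullet> PiD v \<ge> 0) \<and>
       (\<forall>i\<in>Brows. lam i \<le> 0) \<and>
       (\<Sum>i\<in>Brows. lam i * (brow i \<bullet> PiD v)) = 0}"

definition ID :: "real^('n::{finite,linorder}) \<Rightarrow> ('n::{finite,linorder}) set" where
  "ID v = {i\<in>Brows. brow i \<bullet> PiD v = 0}"

definition full_row_rank :: "('n::{finite,linorder}) set \<Rightarrow> bool" where
  "full_row_rank K \<longleftrightarrow> K \<subseteq> Brows \<and>
     (\<forall>c::'n \<Rightarrow> real. (\<Sum>i\<in>K. c i *\<^sub>R brow i) = 0 \<longrightarrow> (\<forall>i\<in>K. c i = 0))"

definition KD :: "real^('n::{finite,linorder}) \<Rightarrow> (('n::{finite,linorder}) set) set" where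
  "KD v = {K. \<exists>lam\<in>MD v. {i. lam i \<noteq> 0} \<subseteq> K \<and> K \<subseteq> ID v \<and> full_row_rank K}"

text \<open>Gram matrix B_K B_K^T (indexed by K x K) and its inverse.\<close>
definition gram :: "('n::{finite,linorder}) set \<Rightarrow> ('n::{finite,linorder}) \<Rightarrow> ('n::{finite,linorder}) \<Rightarrow> real" where
  "gram K a b = brow a \<bullet> brow b"

definition gram_inv :: "('n::{finite,linorder}) set \<Rightarrow> ('n::{finite,linorder}) \<Rightarrow> ('n::{finite,linorder}) \<Rightarrow> real" where
  "gram_inv K = (THE N. (\<forall>a b. (a \<notin> K \<or> b \<notin> K) \<longrightarrow> N a b = 0) \<and>
      (\<forall>a\<in>K. \<forall>c\<in>K. (\<Sum>b\<in>K. gram K a b * N b c) = (if a = c then 1 else 0)) \<and>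
      (\<forall>a\<in>K. \<forall>c\<in>K. (\<Sum>b\<in>K. N a b * gram K b c) = (if a = c then 1 else 0)))"

text \<open>I_n - B_K^T (B_K B_K^T)^{-1} B_K.\<close>
definition Qmat :: "('n::{finite,linorder}) set \<Rightarrow> real^('n::{finite,linorder})^('n::{finite,linorder})" where
  "Qmat K = mat 1 - (\<chi> i j. \<Sum>a\<in>K. \<Sum>b\<in>K. brow a $ i * gram_inv K a b * brow b $ j)"

definition QD :: "real^('n::{finite,linorder}) \<Rightarrow> (real^('n::{finite,linorder})^('n::{finite,linorder})) set" where
  "QD v = Qmat ` KD v"

definition is_perm_mat :: "real^('n::finite)^('n::finite) \<Rightarrow> bool" where
  "is_perm_mat P \<longleftrightarrow> (\<exists>\<sigma>. \<sigma> permutes (UNIV::'n set) \<and> P = (\<chi> i j. if \<sigma> i = j then 1 else 0))"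

definition nonincreasing :: "real^('n::{finite,linorder}) \<Rightarrow> bool" where
  "nonincreasing x \<longleftrightarrow> (\<forall>i j. i \<le> j \<longrightarrow> x$j \<le> x$i)"

text \<open>Psel is the fixed choice y \<mapsto> P_y.\<close>
definition QS :: "(real^('n::{finite,linorder}) \<Rightarrow> real^('n::{finite,linorder})^('n::{finite,linorder})) \<Rightarrow> real \<Rightarrow> real^('n::{finite,linorder}) \<Rightarrow> (real^('n::{finite,linorder})^('n::{finite,linorder})) set" where
  "QS Psel \<rho> y = {transpose (Psel y) ** Qh ** Psel y | Qh. Qh \<in> QD (Psel y *v y - \<rho> *\<^sub>R wvec)}"

definition diag_mat :: "(('n::finite) \<Rightarrow> real) \<Rightarrow> real^'n^'n" where
  "diag_mat q = (\<chi> i j. if i = j then q i else 0)"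

definition dB_prox_l1 :: "real \<Rightarrow> real^('n::finite) \<Rightarrow> (real^'n^'n) set" where
  "dB_prox_l1 \<beta> \<eta> = {diag_mat q | q. \<forall>i.
      (\<bar>\<eta>$i\<bar> < \<beta> \<longrightarrow> q i = 0) \<and> (\<bar>\<eta>$i\<bar> = \<beta> \<longrightarrow> q i \<in> {0,1}) \<and> (\<bar>\<eta>$i\<bar> > \<beta> \<longrightarrow> q i = 1)}"

definition Mset :: "(real^('n::{finite,linorder}) \<Rightarrow> real^('n::{finite,linorder})^('n::{finite,linorder})) \<Rightarrow> real \<Rightarrow> real \<Rightarrow> real^('n::{finite,linorder}) \<Rightarrow> (real^('n::{finite,linorder})^('n::{finite,linorder})) set" where
  "Mset Psel \<beta> \<rho> y = {M. transpose M = M \<and> (\<exists>\<Theta> Q. M = \<Theta> ** Q \<and>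
      \<Theta> \<in> dB_prox_l1 \<beta> (prox (pen_clust \<rho>) y) \<and> Q \<in> QS Psel \<rho> y)}"

definition dir_differentiable :: "(real^('n::finite) \<Rightarrow> real^'n) \<Rightarrow> real^'n \<Rightarrow> bool" where
  "dir_differentiable F x \<longleftrightarrow>
     (\<forall>d. \<exists>L. ((\<lambda>t. (1 / t) *\<^sub>R (F (x + t *\<^sub>R d) - F x)) \<longlongrightarrow> L) (at_right 0))"

end

theory Submission
  imports Defs
begin

text \<open>If P sorts y, the minimiser of the penalised problem stays sorted, where the clustering penalty
  is linear; this gives S_\<rho>(y) = P^T \<Pi>_D(P y - \<rho> w) and Prox_p(y) = soft thresholding of S_\<rho>(y).
  The KKT multipliers of \<Pi>_D(v) show that \<Pi>_D(v) = Q v for every Q \<in> Q_D(v), and every \<Theta> in the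
  B-subdifferential of soft thresholding at \<eta> reproduces it as \<Theta> \<eta> - \<beta> \<Theta> sgn \<eta>. Hence
  Prox_p(y) = V y + c for all V \<in> M(y), with (V, c) from a finite family of affine maps that does
  not depend on y. Since Prox_p is continuous, an affine piece active at points arbitrarily close
  to x is active at x, so Prox_p(x + \<Delta>) - Prox_p(x) - V \<Delta> vanishes for all small \<Delta>: the
  semismoothness estimate holds for every order with constant 0, and along each ray the difference
  quotient is eventually constant.\<close>

section \<open>Proximal points of convex functions\<close>

definition prox_objective :: "('a::real_normed_vector \<Rightarrow> real) \<Rightarrow> 'a \<Rightarrow> 'a \<Rightarrow> real" where
  "prox_objective f y x = (1/2) * (norm (x - y))^2 + f x"

definition is_prox_point :: "('a::real_normed_vector \<Rightarrow> real) \<Rightarrow> 'a \<Rightarrow> 'a \<Rightarrow> bool" where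
  "is_prox_point f y x \<longleftrightarrow> (\<forall>z. prox_objective f y x \<le> prox_objective f y z)"

lemma norm_add_scaleR_power2:
  fixes a b :: "'a::real_inner"
  shows "(norm (a + t *\<^sub>R b))^2 = (norm a)^2 + 2 * t * inner a b + t^2 * (norm b)^2"
  unfolding power2_norm_eq_inner
  by (simp add: inner_add_left inner_add_right inner_commute algebra_simps power2_eq_square)

lemma is_prox_point_variational_ineq:
  fixes f :: "'a::real_inner \<Rightarrow> real"
  assumes f: "convex_on UNIV f" and x: "is_prox_point f y x"
  shows "inner (y - x) (z - x) \<le> f z - f x"
proof (rule ccontr)
  define \<delta> where "\<delta> = inner (y - x) (z - x) - (f z - f x)"
  define N where "N = (norm (z - x))^2"
  assume "\<not> inner (y - x) (z - x) \<le> f z - f x"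
  then have \<delta>_pos: "\<delta> > 0" unfolding \<delta>_def by simp
  have N_nonneg: "N \<ge> 0" unfolding N_def by simp
  \<comment> \<open>comparing x with the points of the segment from x to z\<close>
  have segment: "\<delta> \<le> t * N / 2" if t: "0 < t" "t \<le> 1" for t
  proof -
    have "prox_objective f y x \<le> prox_objective f y ((1-t) *\<^sub>R x + t *\<^sub>R z)"
      using x unfolding is_prox_point_def by blast
    moreover have "f ((1-t) *\<^sub>R x + t *\<^sub>R z) \<le> (1-t) * f x + t * f z"
      using convex_onD[OF f] t by simp
    moreover have "(norm ((1-t) *\<^sub>R x + t *\<^sub>R z - y))^2 = (norm (x-y))^2 + 2*t*inner (x-y) (z-x) + t^2*N"
    proof -
      have "(1-t) *\<^sub>R x + t *\<^sub>R z - y = (x - y) + t *\<^sub>R (z - x)" by (simp add: algebra_simps)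
      then show ?thesis unfolding N_def by (simp only: norm_add_scaleR_power2)
    qed
    ultimately have "0 \<le> t * (inner (x-y) (z-x) + f z - f x) + t^2 * N / 2"
      unfolding prox_objective_def by (simp add: algebra_simps)
    moreover have "inner (x-y) (z-x) = - inner (y - x) (z - x)"
      by (simp add: inner_diff_left)
    ultimately have "t * \<delta> \<le> t * (t * N / 2)"
      unfolding \<delta>_def by (simp add: power2_eq_square algebra_simps)
    then show ?thesis using t by simp
  qed
  show False
  proof (cases "\<delta> \<ge> N + 1")
    case True
    then show False using segment[of 1] N_nonneg by simp
  next
    case False
    define t where "t = \<delta> / (N + 1)"
    have t: "0 < t" "t \<le> 1" using False \<delta>_pos N_nonneg unfolding t_def by auto
    have "\<delta> \<le> t * N / 2" using segment[OF t] .
    also have "\<dots> = \<delta> * (N / (2*(N+1)))" unfolding t_def using N_nonneg by (simp add: field_simps)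
    also have "\<dots> < \<delta> * 1" using \<delta>_pos N_nonneg by (intro mult_strict_left_mono) (auto simp: field_simps)
    finally show False by simp
  qed
qed

lemma is_prox_point_nonexpansive:
  fixes f :: "'a::real_inner \<Rightarrow> real"
  assumes f: "convex_on UNIV f" and "is_prox_point f y1 x1" and "is_prox_point f y2 x2"
  shows "norm (x1 - x2) \<le> norm (y1 - y2)"
proof -
  have "inner (y1 - x1) (x2 - x1) \<le> f x2 - f x1" "inner (y2 - x2) (x1 - x2) \<le> f x1 - f x2"
    using is_prox_point_variational_ineq[OF f] assms(2,3) by blast+
  then have "(norm (x1 - x2))^2 \<le> inner (y1 - y2) (x1 - x2)"
    by (simp add: power2_norm_eq_inner inner_diff_left inner_diff_right inner_commute algebra_simps)
  also have "\<dots> \<le> norm (y1 - y2) * norm (x1 - x2)" by (rule norm_cauchy_schwarz)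
  finally show ?thesis
    by (cases "x1 = x2") (simp_all add: power2_eq_square)
qed

lemma is_prox_point_unique:
  fixes f :: "'a::real_inner \<Rightarrow> real"
  assumes "convex_on UNIV f" and "is_prox_point f y x1" and "is_prox_point f y x2"
  shows "x1 = x2"
  using is_prox_point_nonexpansive[OF assms] by simp

lemma is_prox_point_exists:
  fixes f :: "'a::euclidean_space \<Rightarrow> real"
  assumes cont: "continuous_on UNIV f" and nonneg: "\<And>x. f x \<ge> 0"
  shows "\<exists>x. is_prox_point f y x"
proof -
  \<comment> \<open>outside this ball the objective exceeds its value at y\<close>
  define R where "R = sqrt (2 * prox_objective f y y) + 1"
  have obj_y: "0 \<le> prox_objective f y y" using nonneg by (simp add: prox_objective_def)
  then have R_nonneg: "R \<ge> 0" unfolding R_def by simp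
  then have "cball y R \<noteq> {}" by simp
  moreover have "continuous_on (cball y R) (prox_objective f y)" unfolding prox_objective_def
    by (intro continuous_intros continuous_on_subset[OF cont]) auto
  ultimately obtain x where "x \<in> cball y R" and x_min: "\<forall>z\<in>cball y R. prox_objective f y x \<le> prox_objective f y z"
    using continuous_attains_inf[OF compact_cball] by blast
  have "prox_objective f y x \<le> prox_objective f y z" for z
  proof (cases "z \<in> cball y R")
    case False
    then have "sqrt (2 * prox_objective f y y) < norm (z - y)"
      unfolding R_def by (simp add: dist_norm norm_minus_commute)
    then have "(sqrt (2 * prox_objective f y y))^2 < (norm (z - y))^2"
      using obj_y by (intro power_strict_mono) auto
    then have "prox_objective f y y \<le> prox_objective f y z"
      using obj_y nonneg[of z] unfolding prox_objective_def by simp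
    moreover have "prox_objective f y x \<le> prox_objective f y y"
      using x_min R_nonneg by simp
    ultimately show ?thesis by simp
  qed (use x_min in blast)
  then show ?thesis unfolding is_prox_point_def by blast
qed

lemma prox_eqI:
  assumes "convex_on UNIV f" and "is_prox_point f y x"
  shows "prox f y = x"
  unfolding prox_def
proof (rule the_equality)
  show "\<forall>z. 1/2 * (norm (x - y))\<^sup>2 + f x \<le> 1/2 * (norm (z - y))\<^sup>2 + f z"
    using assms(2) unfolding is_prox_point_def prox_objective_def .
  show "x' = x" if "\<forall>z. 1/2 * (norm (x' - y))\<^sup>2 + f x' \<le> 1/2 * (norm (z - y))\<^sup>2 + f z" for x'
    using is_prox_point_unique[OF assms(1) _ assms(2)] that
    unfolding is_prox_point_def prox_objective_def by blast
qed

lemma is_prox_point_prox: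
  assumes "convex_on UNIV f" and "continuous_on UNIV f" and "\<And>x. f x \<ge> 0"
  shows "is_prox_point f y (prox f y)"
  using is_prox_point_exists[OF assms(2,3)] prox_eqI[OF assms(1)] by metis

lemma continuous_on_prox:
  assumes "convex_on UNIV f" and "continuous_on UNIV f" and "\<And>x. f x \<ge> 0"
  shows "continuous_on UNIV (prox f)"
proof (rule lipschitz_on_continuous_on)
  show "1-lipschitz_on UNIV (prox f)"
    using is_prox_point_nonexpansive[OF assms(1) is_prox_point_prox[OF assms] is_prox_point_prox[OF assms]]
    by (intro lipschitz_onI) (simp_all add: dist_norm)
qed

section \<open>Coordinate permutations\<close>

definition permute_vec :: "('n \<Rightarrow> 'n) \<Rightarrow> real^'n \<Rightarrow> real^'n" where
  "permute_vec \<sigma> x = (\<chi> i. x $ \<sigma> i)"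

lemma permute_vec_nth [simp]: "permute_vec \<sigma> x $ i = x $ \<sigma> i"
  by (simp add: permute_vec_def)

lemma permute_vec_diff: "permute_vec \<sigma> (x - y) = permute_vec \<sigma> x - permute_vec \<sigma> y"
  by (simp add: vec_eq_iff)

lemma permute_vec_inv_permute_vec: "\<sigma> permutes UNIV \<Longrightarrow> permute_vec (inv \<sigma>) (permute_vec \<sigma> x) = x"
  by (simp add: vec_eq_iff permutes_inverses)

lemma permute_vec_permute_vec_inv: "\<sigma> permutes UNIV \<Longrightarrow> permute_vec \<sigma> (permute_vec (inv \<sigma>) x) = x"
  by (simp add: vec_eq_iff permutes_inverses)

lemma sum_UNIV_permute: "\<sigma> permutes (UNIV::'n::finite set) \<Longrightarrow> (\<Sum>i\<in>UNIV. g (\<sigma> i)) = (\<Sum>i\<in>UNIV. g i)"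
  using sum.permute[of \<sigma> UNIV g] by (simp add: o_def)

lemma norm_permute_vec: "\<sigma> permutes UNIV \<Longrightarrow> norm (permute_vec \<sigma> x) = norm x"
  unfolding norm_eq_sqrt_inner inner_vec_def
  using sum_UNIV_permute[of \<sigma> "\<lambda>i. inner (x$i) (x$i)"] by simp

lemma perm_mat_mult_vec:
  assumes "is_perm_mat (P :: real^('n::finite)^'n)"
  obtains \<sigma> where "\<sigma> permutes UNIV" "\<And>x. P *v x = permute_vec \<sigma> x"
    "\<And>x. transpose P *v x = permute_vec (inv \<sigma>) x"
proof -
  obtain \<sigma> where \<sigma>: "\<sigma> permutes UNIV" and P: "P = (\<chi> i j. if \<sigma> i = j then 1 else 0)"
    using assms unfolding is_perm_mat_def by blast
  have "P *v x = permute_vec \<sigma> x" for x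
    unfolding P by (simp add: vec_eq_iff matrix_vector_mult_def if_distrib if_distribR cong: if_cong)
  moreover have "transpose P *v x = permute_vec (inv \<sigma>) x" for x
  proof -
    have "\<sigma> j = i \<longleftrightarrow> j = inv \<sigma> i" for i j using permutes_inverses[OF \<sigma>] by metis
    then show ?thesis unfolding P
      by (simp add: vec_eq_iff matrix_vector_mult_def transpose_def if_distrib if_distribR cong: if_cong)
  qed
  ultimately show thesis using that \<sigma> by blast
qed

section \<open>The penalty\<close>

lemma sum_strict_pairs_symmetric:
  fixes g :: "'n::{finite,linorder} \<Rightarrow> 'n \<Rightarrow> real"
  assumes sym: "\<And>i j. g i j = g j i" and diag: "\<And>i. g i i = 0"
  shows "(\<Sum>(i,j)\<in>{(i,j). i < j}. g i j) = (\<Sum>i\<in>UNIV. \<Sum>j\<in>UNIV. g i j) / 2"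
proof -
  let ?A = "{(i::'n,j). i < j}" and ?B = "{(i::'n,j). j < i}" and ?C = "{(i::'n,j). i = j}"
  have "(UNIV :: ('n \<times> 'n) set) = ?A \<union> ?B \<union> ?C" by auto
  then have "(\<Sum>i\<in>UNIV. \<Sum>j\<in>UNIV. g i j) = (\<Sum>(i,j)\<in>?A \<union> ?B \<union> ?C. g i j)"
    by (simp add: sum.cartesian_product)
  also have "\<dots> = (\<Sum>(i,j)\<in>?A \<union> ?B. g i j) + (\<Sum>(i,j)\<in>?C. g i j)"
    by (rule sum.union_disjoint) auto
  also have "(\<Sum>(i,j)\<in>?A \<union> ?B. g i j) = (\<Sum>(i,j)\<in>?A. g i j) + (\<Sum>(i,j)\<in>?B. g i j)"
    by (rule sum.union_disjoint) auto
  also have "(\<Sum>(i,j)\<in>?C. g i j) = 0" by (rule sum.neutral) (auto simp: diag)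
  also have "(\<Sum>(i,j)\<in>?B. g i j) = (\<Sum>(i,j)\<in>?A. g i j)"
  proof -
    have "?B = prod.swap ` ?A" by auto
    then show ?thesis by (simp add: sum.reindex case_prod_unfold sym)
  qed
  finally show ?thesis by simp
qed

lemma pen_p_eq:
  "pen_p \<beta> \<rho> x = \<beta> * (\<Sum>i\<in>UNIV. \<bar>x$i\<bar>) + \<rho> * ((\<Sum>i\<in>UNIV. \<Sum>j\<in>UNIV. \<bar>x$i - x$j\<bar>) / 2)"
  unfolding pen_p_def by (subst sum_strict_pairs_symmetric) auto

lemma pen_p_permute_vec:
  assumes \<sigma>: "\<sigma> permutes UNIV"
  shows "pen_p \<beta> \<rho> (permute_vec \<sigma> x) = pen_p \<beta> \<rho> x"
proof -
  have "(\<Sum>i\<in>UNIV. \<Sum>j\<in>UNIV. \<bar>x $ \<sigma> i - x $ \<sigma> j\<bar>) = (\<Sum>i\<in>UNIV. \<Sum>j\<in>UNIV. \<bar>x $ \<sigma> i - x $ j\<bar>)"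
    using sum_UNIV_permute[OF \<sigma>, of "\<lambda>j. \<bar>x $ \<sigma> _ - x $ j\<bar>"] by simp
  also have "\<dots> = (\<Sum>i\<in>UNIV. \<Sum>j\<in>UNIV. \<bar>x $ i - x $ j\<bar>)"
    by (rule sum_UNIV_permute[OF \<sigma>, of "\<lambda>i. \<Sum>j\<in>UNIV. \<bar>x $ i - x $ j\<bar>"])
  finally show ?thesis
    unfolding pen_p_eq permute_vec_nth using sum_UNIV_permute[OF \<sigma>, of "\<lambda>i. \<bar>x $ i\<bar>"] by simp
qed

lemma pen_clust_eq_pen_p: "pen_clust \<rho> = pen_p 0 \<rho>"
  by (rule ext) (simp add: pen_clust_def pen_p_def)

lemma convex_on_abs_linear: "linear l \<Longrightarrow> convex_on UNIV (\<lambda>x. \<bar>l x :: real\<bar>)"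
  by (rule convex_onI) (auto simp: linear_add linear_scale intro: order_trans[OF abs_triangle_ineq] simp: abs_mult)

lemma convex_on_sum_fun:
  assumes "finite I" and "\<And>i. i \<in> I \<Longrightarrow> convex_on S (f i)" and "convex S"
  shows "convex_on S (\<lambda>x. \<Sum>i\<in>I. f i x)"
  using assms by (induction I rule: finite_induct) (auto simp: convex_on_const)

lemma convex_on_pen_p:
  assumes "\<beta> \<ge> 0" "\<rho> \<ge> 0"
  shows "convex_on UNIV (pen_p \<beta> \<rho> :: real^('n::{finite,linorder}) \<Rightarrow> real)"
proof -
  have "convex_on UNIV (\<lambda>x::real^('n::{finite,linorder}). \<bar>x$i - x$j\<bar>)" for i j
    by (rule convex_on_abs_linear, rule linearI) (simp_all add: algebra_simps)
  then have "convex_on UNIV (\<lambda>x::real^('n::{finite,linorder}). case p of (i,j) \<Rightarrow> \<bar>x$i - x$j\<bar>)" for p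
    by (cases p) simp
  moreover have "convex_on UNIV (\<lambda>x::real^('n::{finite,linorder}). \<bar>x$i\<bar>)" for i
    by (rule convex_on_abs_linear, rule linearI) (simp_all add: algebra_simps)
  ultimately show ?thesis unfolding pen_p_def[abs_def] using assms
    by (intro convex_on_add convex_on_cmul convex_on_sum_fun) auto
qed

lemma pen_p_nonneg: "\<beta> \<ge> 0 \<Longrightarrow> \<rho> \<ge> 0 \<Longrightarrow> pen_p \<beta> \<rho> x \<ge> 0"
  unfolding pen_p_def by (intro add_nonneg_nonneg mult_nonneg_nonneg sum_nonneg) auto

lemma continuous_on_pen_p: "continuous_on UNIV (pen_p \<beta> \<rho>)"
  unfolding pen_p_eq[abs_def] by (intro continuous_intros) auto

lemma is_prox_point_pen_p:
  "\<beta> \<ge> 0 \<Longrightarrow> \<rho> \<ge> 0 \<Longrightarrow> is_prox_point (pen_p \<beta> \<rho>) y (prox (pen_p \<beta> \<rho>) y)"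
  by (intro is_prox_point_prox convex_on_pen_p continuous_on_pen_p pen_p_nonneg)

lemma continuous_on_prox_pen_p: "\<beta> \<ge> 0 \<Longrightarrow> \<rho> \<ge> 0 \<Longrightarrow> continuous_on UNIV (prox (pen_p \<beta> \<rho>))"
  by (intro continuous_on_prox convex_on_pen_p continuous_on_pen_p pen_p_nonneg)

text \<open>Swapping two misordered coordinates of a prox point keeps the penalty and does not increase
  the distance to y, so by uniqueness the prox point inherits the order of y.\<close>

lemma is_prox_point_pen_p_mono:
  fixes x y :: "real^('n::{finite,linorder})"
  assumes "\<beta> \<ge> 0" "\<rho> \<ge> 0" and x: "is_prox_point (pen_p \<beta> \<rho>) y x" and y_ab: "y$b \<le> y$a"
  shows "x$b \<le> x$a"
proof (rule ccontr)
  assume "\<not> x$b \<le> x$a"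
  then have x_ab: "x$a < x$b" by simp
  then have "a \<noteq> b" by auto
  define \<tau> where "\<tau> = Transposition.transpose a b"
  have \<tau>: "\<tau> permutes UNIV" unfolding \<tau>_def by (rule permutes_swap_id) auto
  define x' where "x' = permute_vec \<tau> x"
  have norm_sq: "(norm v)^2 = (\<Sum>i\<in>UNIV. (v$i)^2)" for v :: "real^('n::{finite,linorder})"
    unfolding power2_norm_eq_inner inner_vec_def by (simp add: power2_eq_square)
  have sum_split: "(\<Sum>i\<in>UNIV. g i) = g a + g b + (\<Sum>i\<in>UNIV-{a,b}. g i)" for g :: "'n \<Rightarrow> real"
  proof -
    have "(\<Sum>i\<in>UNIV. g i) = (\<Sum>i\<in>{a,b}. g i) + (\<Sum>i\<in>UNIV-{a,b}. g i)"
      by (subst sum.union_disjoint[symmetric]) (auto intro: sum.cong)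
    then show ?thesis using \<open>a \<noteq> b\<close> by simp
  qed
  have rest: "(\<Sum>i\<in>UNIV-{a,b}. (x'$i - y$i)^2) = (\<Sum>i\<in>UNIV-{a,b}. (x$i - y$i)^2)"
    by (intro sum.cong) (auto simp: x'_def \<tau>_def)
  have "(norm (x' - y))^2 - (norm (x - y))^2 = (x$b - y$a)^2 + (x$a - y$b)^2 - (x$a - y$a)^2 - (x$b - y$b)^2"
    unfolding norm_sq sum_split[of "\<lambda>i. ((x' - y)$i)^2"] sum_split[of "\<lambda>i. ((x - y)$i)^2"]
    using rest \<open>a \<noteq> b\<close> by (simp add: x'_def \<tau>_def)
  also have "\<dots> = 2 * ((x$a - x$b) * (y$a - y$b))" by (simp add: power2_eq_square algebra_simps)
  also have "\<dots> \<le> 0" using x_ab y_ab by (simp add: mult_nonpos_nonneg)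
  finally have "prox_objective (pen_p \<beta> \<rho>) y x' \<le> prox_objective (pen_p \<beta> \<rho>) y x"
    unfolding prox_objective_def x'_def pen_p_permute_vec[OF \<tau>] by simp
  then have "is_prox_point (pen_p \<beta> \<rho>) y x'"
    using x unfolding is_prox_point_def by (meson order_trans)
  then have "x' = x" using is_prox_point_unique[OF convex_on_pen_p[OF assms(1,2)] _ x] by blast
  then show False using x_ab unfolding x'_def \<tau>_def by (metis permute_vec_nth transpose_apply_first less_irrefl)
qed

section \<open>Soft thresholding\<close>

definition soft_threshold :: "real \<Rightarrow> real \<Rightarrow> real" where
  "soft_threshold \<beta> a = sgn a * max (\<bar>a\<bar> - \<beta>) 0"

definition soft_threshold_vec :: "real \<Rightarrow> real^'n \<Rightarrow> real^'n" where
  "soft_threshold_vec \<beta> x = (\<chi> i. soft_threshold \<beta> (x$i))"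

lemma soft_threshold_vec_nth [simp]: "soft_threshold_vec \<beta> x $ i = soft_threshold \<beta> (x$i)"
  by (simp add: soft_threshold_vec_def)

lemma soft_threshold_mono: "\<beta> \<ge> 0 \<Longrightarrow> a \<le> b \<Longrightarrow> soft_threshold \<beta> a \<le> soft_threshold \<beta> b"
  unfolding soft_threshold_def by (auto simp: sgn_if max_def)

lemma soft_threshold_diff_le: "\<beta> \<ge> 0 \<Longrightarrow> a \<le> b \<Longrightarrow> soft_threshold \<beta> b - soft_threshold \<beta> a \<le> b - a"
  unfolding soft_threshold_def by (auto simp: sgn_if max_def)

lemma soft_threshold_zero [simp]: "soft_threshold 0 a = a"
  unfolding soft_threshold_def by (auto simp: sgn_if)

lemma soft_threshold_vec_permute_vec:
  "soft_threshold_vec \<beta> (permute_vec \<sigma> x) = permute_vec \<sigma> (soft_threshold_vec \<beta> x)"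
  by (simp add: vec_eq_iff)

lemma soft_threshold_vec_zero [simp]: "soft_threshold_vec 0 x = x"
  by (simp add: vec_eq_iff)

lemma soft_threshold_subgradient:
  assumes "\<beta> \<ge> 0"
  shows "(a - soft_threshold \<beta> a) * (z - soft_threshold \<beta> a) \<le> \<beta> * (\<bar>z\<bar> - \<bar>soft_threshold \<beta> a\<bar>)"
proof -
  consider "a > \<beta>" | "a < -\<beta>" | "\<bar>a\<bar> \<le> \<beta>" by linarith
  then show ?thesis
  proof cases
    case 1
    then have t: "soft_threshold \<beta> a = a - \<beta>" using assms unfolding soft_threshold_def by (auto simp: sgn_if)
    have "\<beta> * z \<le> \<beta> * \<bar>z\<bar>" using assms by (intro mult_left_mono) auto
    then show ?thesis unfolding t using 1 assms by (simp add: algebra_simps)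
  next
    case 2
    then have t: "soft_threshold \<beta> a = a + \<beta>" using assms unfolding soft_threshold_def by (auto simp: sgn_if)
    have "\<beta> * (-z) \<le> \<beta> * \<bar>z\<bar>" using assms by (intro mult_left_mono) auto
    then show ?thesis unfolding t using 2 assms by (simp add: algebra_simps)
  next
    case 3
    then have "soft_threshold \<beta> a = 0" unfolding soft_threshold_def by (auto simp: max_def)
    moreover have "a * z \<le> \<beta> * \<bar>z\<bar>"
      using 3 abs_ge_self[of "a * z"] mult_right_mono[OF 3, of "\<bar>z\<bar>"] by (simp add: abs_mult)
    ultimately show ?thesis by simp
  qed
qed

section \<open>The monotone cone and its projection\<close>

lemma Dset_iff: "x \<in> Dset \<longleftrightarrow> (\<forall>i j. i \<le> j \<longrightarrow> x$j \<le> x$i)"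
  by (simp add: Dset_def)

lemma closed_Dset: "closed (Dset :: (real^('n::{finite,linorder})) set)"
proof -
  have "Dset = (\<Inter>i. \<Inter>j. {x::real^('n::{finite,linorder}). i \<le> j \<longrightarrow> x$j \<le> x$i})"
    by (auto simp: Dset_def)
  moreover have "closed {x::real^('n::{finite,linorder}). i \<le> j \<longrightarrow> x$j \<le> x$i}" for i j
    by (cases "i \<le> j") (auto intro!: closed_Collect_le linear_continuous_on bounded_linear_vec_nth)
  then have "closed (\<Inter>i. \<Inter>j. {x::real^('n::{finite,linorder}). i \<le> j \<longrightarrow> x$j \<le> x$i})"
    by (intro closed_INT ballI)
  ultimately show ?thesis by simp
qed

lemma convex_Dset: "convex (Dset :: (real^('n::{finite,linorder})) set)"
  unfolding convex_def Dset_def by (auto intro!: add_mono mult_left_mono)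

lemma Dset_add: "x \<in> Dset \<Longrightarrow> y \<in> Dset \<Longrightarrow> x + y \<in> Dset"
  unfolding Dset_iff by (simp add: add_mono)

lemma soft_threshold_vec_in_Dset: "\<beta> \<ge> 0 \<Longrightarrow> x \<in> Dset \<Longrightarrow> soft_threshold_vec \<beta> x \<in> Dset"
  unfolding Dset_iff by (simp add: soft_threshold_mono)

lemma diff_soft_threshold_vec_in_Dset: "\<beta> \<ge> 0 \<Longrightarrow> x \<in> Dset \<Longrightarrow> x - soft_threshold_vec \<beta> x \<in> Dset"
  unfolding Dset_iff using soft_threshold_diff_le by fastforce

lemma PiD_in_Dset: "PiD v \<in> Dset"
proof -
  have "0 \<in> Dset" by (simp add: Dset_iff)
  then show ?thesis unfolding PiD_def using closest_point_in_set[OF closed_Dset] by blast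
qed

lemma PiD_variational_ineq: "x \<in> Dset \<Longrightarrow> inner (v - PiD v) (x - PiD v) \<le> 0"
  unfolding PiD_def by (rule closest_point_dot[OF convex_Dset closed_Dset])

lemma card_greater: "card {j::'n::{finite,linorder}. i < j} = CARD('n) - 1 - rk i"
proof -
  have "(UNIV::'n set) = ({j. j < i} \<union> {i}) \<union> {j. i < j}" by auto
  moreover have "card (({j. j < i} \<union> {i}) \<union> {j. i < j}) = card {j. j < i} + 1 + card {j. i < j}"
    by (subst card_Un_disjoint) (auto simp: card_Un_disjoint)
  ultimately show ?thesis unfolding rk_def by simp
qed

lemma sum_strict_pairs_fst:
  "(\<Sum>(i,j)\<in>{(i::'n::{finite,linorder},j). i < j}. f i) = (\<Sum>i\<in>UNIV. f i * real (card {j. i < j}))"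
proof -
  have "{(i::'n,j). i < j} = Sigma UNIV (\<lambda>i. {j. i < j})" by auto
  then show ?thesis by (simp add: sum.Sigma[symmetric] mult.commute)
qed

lemma sum_strict_pairs_snd:
  "(\<Sum>(i,j)\<in>{(i::'n::{finite,linorder},j). i < j}. f j) = (\<Sum>j\<in>UNIV. f j * real (rk j))"
proof -
  have "{(i::'n,j). i < j} = prod.swap ` Sigma UNIV (\<lambda>j. {i. i < j})" by auto
  then have "(\<Sum>(i,j)\<in>{(i::'n,j). i < j}. f j) = (\<Sum>(j,i)\<in>Sigma UNIV (\<lambda>j. {i. i < j}). f j)"
    by (simp add: sum.reindex case_prod_unfold)
  also have "\<dots> = (\<Sum>j\<in>UNIV. \<Sum>i\<in>{i. i < j}. f j)" by (rule sum.Sigma[symmetric]) auto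
  finally show ?thesis by (simp add: rk_def mult.commute)
qed

text \<open>The weight w_k = n - 2k + 1 of the k-th coordinate counts the pairs in which it is the
  larger index minus those in which it is the smaller one.\<close>

lemma inner_wvec: "inner wvec z = (\<Sum>(i,j)\<in>{(i::'n::{finite,linorder},j). i < j}. z$i - z$j)"
proof -
  have "rk i < CARD('n)" for i :: 'n
    unfolding rk_def by (rule psubset_card_mono) auto
  then have w: "wvec $ i = real (card {j. i < j}) - real (rk i)" for i :: 'n
    unfolding card_greater wvec_def by (simp add: Suc_leI of_nat_diff algebra_simps)
  have "(\<Sum>(i,j)\<in>{(i::'n,j). i < j}. z$i - z$j)
      = (\<Sum>(i,j)\<in>{(i::'n,j). i < j}. z$i) - (\<Sum>(i,j)\<in>{(i::'n,j). i < j}. z$j)"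
    by (simp add: sum_subtractf case_prod_unfold)
  also have "\<dots> = (\<Sum>i\<in>UNIV. z$i * (real (card {j. i < j}) - real (rk i)))"
    by (simp add: sum_strict_pairs_fst sum_strict_pairs_snd sum_subtractf algebra_simps)
  finally show ?thesis by (simp add: inner_vec_def w mult.commute)
qed

definition l1_norm :: "real^'n \<Rightarrow> real" where
  "l1_norm x = (\<Sum>i\<in>UNIV. \<bar>x$i\<bar>)"

lemma pen_p_Dset: "z \<in> Dset \<Longrightarrow> pen_p \<beta> \<rho> z = \<beta> * l1_norm z + \<rho> * inner wvec z"
  unfolding pen_p_def l1_norm_def inner_wvec Dset_iff by (auto intro!: sum.cong)

section \<open>Closed form of the proximal map\<close>

lemma half_norm_diff_power2_plus_inner:
  fixes z a w :: "'a::real_inner"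
  shows "(1/2) * (norm (z - a))^2 + \<rho> * inner w z
    = (1/2) * (norm (z - (a - \<rho> *\<^sub>R w)))^2 + (\<rho> * inner w a - (1/2) * \<rho>^2 * (norm w)^2)"
  unfolding power2_norm_eq_inner
  by (simp add: inner_diff_left inner_diff_right inner_commute algebra_simps power2_eq_square)

lemma soft_threshold_PiD_quadratic_growth:
  fixes v z :: "real^('n::{finite,linorder})"
  assumes \<beta>: "\<beta> \<ge> 0" and z: "z \<in> Dset"
  defines "e \<equiv> soft_threshold_vec \<beta> (PiD v)"
  shows "(1/2) * (norm (e - v))^2 + \<beta> * l1_norm e + (1/2) * (norm (z - e))^2
    \<le> (1/2) * (norm (z - v))^2 + \<beta> * l1_norm z"
proof -
  define d where "d = PiD v"
  have "inner (v - d) ((d + z) - d) \<le> 0"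
    unfolding d_def by (rule PiD_variational_ineq[OF Dset_add[OF PiD_in_Dset z]])
  moreover have "inner (v - d) ((d - e) - d) \<le> 0"
    unfolding d_def e_def
    by (rule PiD_variational_ineq[OF diff_soft_threshold_vec_in_Dset[OF \<beta> PiD_in_Dset]])
  moreover have "inner (d - e) (z - e) \<le> \<beta> * (l1_norm z - l1_norm e)"
  proof -
    have "inner (d - e) (z - e)
        = (\<Sum>i\<in>UNIV. (d$i - soft_threshold \<beta> (d$i)) * (z$i - soft_threshold \<beta> (d$i)))"
      unfolding inner_vec_def e_def d_def by simp
    also have "\<dots> \<le> (\<Sum>i\<in>UNIV. \<beta> * (\<bar>z$i\<bar> - \<bar>soft_threshold \<beta> (d$i)\<bar>))"
      by (intro sum_mono soft_threshold_subgradient[OF \<beta>])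
    also have "\<dots> = \<beta> * (l1_norm z - l1_norm e)"
      unfolding l1_norm_def e_def d_def by (simp add: sum_distrib_left sum_subtractf right_diff_distrib)
    finally show ?thesis .
  qed
  ultimately have "inner (v - e) (z - e) \<le> \<beta> * (l1_norm z - l1_norm e)"
    by (simp add: inner_diff_left inner_diff_right inner_minus_right algebra_simps)
  moreover have "(norm (z - v))^2 = (norm (z - e))^2 - 2 * inner (v - e) (z - e) + (norm (e - v))^2"
    using norm_add_scaleR_power2[of "z - e" 1 "e - v"]
    by (simp add: inner_commute inner_diff_left inner_diff_right)
  ultimately show ?thesis by (simp add: algebra_simps)
qed

text \<open>For a sorting permutation \<sigma> of y, the penalty agrees on the cone with
  \<beta> l1_norm + \<rho> \<langle>wvec, .\<rangle>; completing the square moves the linear term into the shift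
  y \<mapsto> \<sigma> y - \<rho> wvec, and the minimiser over the cone (which contains the sorted prox point) is given by
  the previous lemma.\<close>

lemma prox_pen_p_eq:
  fixes y :: "real^('n::{finite,linorder})"
  assumes \<beta>: "\<beta> \<ge> 0" and \<rho>: "\<rho> \<ge> 0" and \<sigma>: "\<sigma> permutes UNIV"
    and sorted: "nonincreasing (permute_vec \<sigma> y)"
  shows "prox (pen_p \<beta> \<rho>) y
    = permute_vec (inv \<sigma>) (soft_threshold_vec \<beta> (PiD (permute_vec \<sigma> y - \<rho> *\<^sub>R wvec)))"
proof -
  define x where "x = prox (pen_p \<beta> \<rho>) y"
  define v where "v = permute_vec \<sigma> y - \<rho> *\<^sub>R wvec"
  define e where "e = soft_threshold_vec \<beta> (PiD v)"
  define z where "z = permute_vec \<sigma> x"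
  define c where "c = \<rho> * inner wvec (permute_vec \<sigma> y) - (1/2) * \<rho>^2 * (norm (wvec::real^('n::{finite,linorder})))^2"
  have x: "is_prox_point (pen_p \<beta> \<rho>) y x"
    unfolding x_def by (rule is_prox_point_pen_p[OF \<beta> \<rho>])
  have z_Dset: "z \<in> Dset" unfolding Dset_iff z_def
    using sorted is_prox_point_pen_p_mono[OF \<beta> \<rho> x] by (simp add: nonincreasing_def)
  have e_Dset: "e \<in> Dset" unfolding e_def by (rule soft_threshold_vec_in_Dset[OF \<beta> PiD_in_Dset])
  have objective: "prox_objective (pen_p \<beta> \<rho>) y (permute_vec (inv \<sigma>) u)
      = (1/2) * (norm (u - v))^2 + \<beta> * l1_norm u + c" if "u \<in> Dset" for u
  proof -
    have "norm (permute_vec (inv \<sigma>) u - y) = norm (u - permute_vec \<sigma> y)"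
      using norm_permute_vec[OF \<sigma>, of "permute_vec (inv \<sigma>) u - y"]
      by (simp add: permute_vec_diff permute_vec_permute_vec_inv[OF \<sigma>])
    moreover have "pen_p \<beta> \<rho> (permute_vec (inv \<sigma>) u) = \<beta> * l1_norm u + \<rho> * inner wvec u"
      using pen_p_permute_vec[OF permutes_inv[OF \<sigma>]] pen_p_Dset[OF that] by simp
    ultimately show ?thesis
      unfolding prox_objective_def v_def c_def
      using half_norm_diff_power2_plus_inner[of u "permute_vec \<sigma> y" \<rho> wvec] by simp
  qed
  have x_eq: "x = permute_vec (inv \<sigma>) z" unfolding z_def by (simp add: permute_vec_inv_permute_vec[OF \<sigma>])
  have "prox_objective (pen_p \<beta> \<rho>) y x \<le> prox_objective (pen_p \<beta> \<rho>) y (permute_vec (inv \<sigma>) e)"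
    using x unfolding is_prox_point_def by blast
  then have "(1/2) * (norm (z - v))^2 + \<beta> * l1_norm z \<le> (1/2) * (norm (e - v))^2 + \<beta> * l1_norm e"
    unfolding x_eq objective[OF z_Dset] objective[OF e_Dset] by simp
  with soft_threshold_PiD_quadratic_growth[OF \<beta> z_Dset, of v] have "(norm (z - e))^2 \<le> 0"
    unfolding e_def by linarith
  then have "z = e" by simp
  then show ?thesis unfolding x_def[symmetric] x_eq e_def v_def by simp
qed

section \<open>The difference matrix B and the matrices Qmat\<close>

lemma succ_idx_gt: "i \<in> Brows \<Longrightarrow> i < succ_idx i"
proof -
  assume "i \<in> Brows"
  then have "{j. i < j} \<noteq> {}" unfolding Brows_def by auto
  then show ?thesis unfolding succ_idx_def using Min_in[of "{j. i < j}"] by auto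
qed

lemma succ_idx_le: "i < j \<Longrightarrow> succ_idx i \<le> j"
  unfolding succ_idx_def by (rule Min_le) auto

lemma brow_nth: "brow i $ j = (if j = i then 1 else if j = succ_idx i then -1 else 0)"
  by (simp add: brow_def)

lemma inner_brow: "i \<in> Brows \<Longrightarrow> inner (brow i) x = x$i - x$succ_idx i"
proof -
  assume i: "i \<in> Brows"
  then have "succ_idx i \<noteq> i" using succ_idx_gt by force
  then have "inner (brow i) x = (\<Sum>j\<in>UNIV. (if j = i then x$j else 0) + (if j = succ_idx i then - x$j else 0))"
    unfolding inner_vec_def brow_nth by (intro sum.cong) auto
  then show ?thesis by (simp add: sum.distrib)
qed

lemma inner_brow_nonneg: "x \<in> Dset \<Longrightarrow> i \<in> Brows \<Longrightarrow> inner (brow i) x \<ge> 0"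
  using succ_idx_gt[of i] by (simp add: inner_brow Dset_iff)

text \<open>B is upper bidiagonal, so a vanishing combination of its rows has a vanishing coefficient
  at the smallest index, and hence everywhere.\<close>

lemma full_row_rank_subset_Brows:
  assumes K: "K \<subseteq> Brows"
  shows "full_row_rank K"
  unfolding full_row_rank_def
proof (intro conjI allI impI ballI K)
  fix c :: "'a \<Rightarrow> real" and i assume comb: "(\<Sum>i\<in>K. c i *\<^sub>R brow i) = 0" and "i \<in> K"
  show "c i = 0"
  proof (rule ccontr)
    define S where "S = {i\<in>K. c i \<noteq> 0}"
    define m where "m = Min S"
    assume "c i \<noteq> 0"
    then have "S \<noteq> {}" using \<open>i \<in> K\<close> unfolding S_def by auto
    then have "m \<in> S" unfolding m_def by (intro Min_in) auto
    then have m: "m \<in> K" "c m \<noteq> 0" unfolding S_def by auto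
    have m_min: "m \<le> j" if "j \<in> K" "c j \<noteq> 0" for j
      unfolding m_def using that by (intro Min_le) (auto simp: S_def)
    have "c j * brow j $ m = (if j = m then c j else 0)" if "j \<in> K" for j
    proof -
      have "c j = 0" if "m = succ_idx j" "j \<noteq> m"
        using m_min[of j] succ_idx_gt[of j] K \<open>j \<in> K\<close> that by force
      then show ?thesis by (auto simp: brow_nth)
    qed
    then have "(\<Sum>j\<in>K. c j *\<^sub>R brow j) $ m = c m"
      using m by (simp add: sum_component cong: sum.cong)
    then show False using comb m by simp
  qed
qed

definition is_gram_inverse :: "('n::{finite,linorder}) set \<Rightarrow> ('n \<Rightarrow> 'n \<Rightarrow> real) \<Rightarrow> bool" where
  "is_gram_inverse K N \<longleftrightarrow> (\<forall>a b. (a \<notin> K \<or> b \<notin> K) \<longrightarrow> N a b = 0) \<and>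
      (\<forall>a\<in>K. \<forall>c\<in>K. (\<Sum>b\<in>K. gram K a b * N b c) = (if a = c then 1 else 0)) \<and>
      (\<forall>a\<in>K. \<forall>c\<in>K. (\<Sum>b\<in>K. N a b * gram K b c) = (if a = c then 1 else 0))"

lemma gram_sym: "gram K a b = gram K b a"
  by (simp add: gram_def inner_commute)

text \<open>A right inverse N of the symmetric matrix gram K is symmetric (by associativity, since
  N^T is then a left inverse), hence also a left inverse.\<close>

lemma gram_right_inverse_sym:
  assumes K: "finite K" and right: "\<And>a c. a \<in> K \<Longrightarrow> c \<in> K \<Longrightarrow> (\<Sum>b\<in>K. gram K a b * N b c) = (if a = c then 1 else 0)"
    and "a \<in> K" "c \<in> K"
  shows "N a c = N c a"
proof -
  have "N a c = (\<Sum>e\<in>K. (if e = a then 1 else 0) * N e c)"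
    using \<open>a \<in> K\<close> K by (simp add: if_distrib if_distribR cong: if_cong)
  also have "\<dots> = (\<Sum>e\<in>K. (\<Sum>b\<in>K. gram K e b * N b a) * N e c)"
    using right \<open>a \<in> K\<close> by (intro sum.cong) auto
  also have "\<dots> = (\<Sum>e\<in>K. \<Sum>b\<in>K. N b a * (gram K b e * N e c))"
    by (simp add: sum_distrib_left sum_distrib_right gram_sym mult_ac)
  also have "\<dots> = (\<Sum>b\<in>K. N b a * (\<Sum>e\<in>K. gram K b e * N e c))"
    by (subst sum.swap) (simp add: sum_distrib_left)
  also have "\<dots> = (\<Sum>b\<in>K. N b a * (if b = c then 1 else 0))"
    using right \<open>c \<in> K\<close> by (intro sum.cong) auto
  also have "\<dots> = N c a" using \<open>c \<in> K\<close> K by (simp add: if_distrib cong: if_cong)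
  finally show ?thesis .
qed

lemma gram_full_row_rank_injective:
  assumes fr: "full_row_rank K" and c: "\<And>a. a \<in> K \<Longrightarrow> (\<Sum>b\<in>K. gram K a b * c b) = 0" and "i \<in> K"
  shows "c i = 0"
proof -
  define w where "w = (\<Sum>b\<in>K. c b *\<^sub>R brow b)"
  have "inner w w = (\<Sum>a\<in>K. c a * (\<Sum>b\<in>K. gram K a b * c b))"
    unfolding w_def gram_def
    by (simp add: inner_sum_left inner_sum_right sum_distrib_left inner_commute algebra_simps)
  also have "\<dots> = 0" using c by simp
  finally have "w = 0" by simp
  then show ?thesis using fr \<open>i \<in> K\<close> unfolding full_row_rank_def w_def by blast
qed

lemma is_gram_inverse_exists:
  fixes K :: "('n::{finite,linorder}) set"
  assumes fr: "full_row_rank K"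
  shows "\<exists>N. is_gram_inverse K N"
proof -
  \<comment> \<open>gram K acting on the coordinates in K, extended by the identity\<close>
  define G where "G c = (\<chi> a. if a \<in> K then \<Sum>b\<in>K. gram K a b * c$b else c$a)" for c :: "real^('n::{finite,linorder})"
  have lin: "linear G"
    unfolding G_def
    by (rule linearI) (simp_all add: vec_eq_iff sum.distrib distrib_left sum_distrib_left mult.left_commute)
  have "G c = 0 \<Longrightarrow> c = 0" for c
    using gram_full_row_rank_injective[OF fr, of "vec_nth c"]
    unfolding G_def by (simp add: vec_eq_iff) metis
  then have "inj G" using linear_injective_0[OF lin] by blast
  then obtain H where H: "\<And>x. G (H x) = x"
    using linear_injective_isomorphism[OF lin] by metis
  define N where "N a c = (if a \<in> K \<and> c \<in> K then H (axis c 1) $ a else 0)" for a c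
  have right: "(\<Sum>b\<in>K. gram K a b * N b c) = (if a = c then 1 else 0)" if "a \<in> K" "c \<in> K" for a c
  proof -
    have "(\<Sum>b\<in>K. gram K a b * N b c) = G (H (axis c 1)) $ a"
      unfolding N_def G_def using that by (simp cong: sum.cong)
    then show ?thesis by (simp add: H axis_def)
  qed
  have left: "(\<Sum>b\<in>K. N a b * gram K b c) = (if a = c then 1 else 0)" if "a \<in> K" "c \<in> K" for a c
  proof -
    have "(\<Sum>b\<in>K. N a b * gram K b c) = (\<Sum>b\<in>K. gram K c b * N b a)"
      using gram_right_inverse_sym[OF finite right] that by (intro sum.cong) (auto simp: gram_sym)
    then show ?thesis using right[OF that(2,1)] by auto
  qed
  have "is_gram_inverse K N" unfolding is_gram_inverse_def using right left by (auto simp: N_def)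
  then show ?thesis by blast
qed

lemma is_gram_inverse_unique:
  assumes "is_gram_inverse K N1" "is_gram_inverse K N2" shows "N1 = N2"
proof (intro ext)
  fix a c
  show "N1 a c = N2 a c"
  proof (cases "a \<in> K \<and> c \<in> K")
    case True
    have "N1 a c = (\<Sum>b\<in>K. N1 a b * (if b = c then 1 else 0))"
      using True by (simp add: if_distrib cong: if_cong)
    also have "\<dots> = (\<Sum>b\<in>K. N1 a b * (\<Sum>e\<in>K. gram K b e * N2 e c))"
      using assms(2) True unfolding is_gram_inverse_def by (intro sum.cong) auto
    also have "\<dots> = (\<Sum>b\<in>K. \<Sum>e\<in>K. N1 a b * gram K b e * N2 e c)"
      by (simp add: sum_distrib_left mult.assoc)
    also have "\<dots> = (\<Sum>e\<in>K. (\<Sum>b\<in>K. N1 a b * gram K b e) * N2 e c)"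
      by (subst sum.swap) (simp add: sum_distrib_right)
    also have "\<dots> = (\<Sum>e\<in>K. (if a = e then 1 else 0) * N2 e c)"
      using assms(1) True unfolding is_gram_inverse_def by (intro sum.cong) auto
    also have "\<dots> = N2 a c" using True by (simp add: if_distrib if_distribR cong: if_cong)
    finally show ?thesis .
  qed (use assms in \<open>auto simp: is_gram_inverse_def\<close>)
qed

lemma is_gram_inverse_gram_inv: "full_row_rank K \<Longrightarrow> is_gram_inverse K (gram_inv K)"
  using theI'[of "is_gram_inverse K"] is_gram_inverse_exists is_gram_inverse_unique
  unfolding gram_inv_def is_gram_inverse_def[symmetric] by metis

text \<open>Qmat K is the orthogonal projection onto the null space of the rows brow i, i \<in> K.\<close>

lemma Qmat_mult_vec_orthogonal_decomp:
  fixes v d :: "real^('n::{finite,linorder})"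
  assumes fr: "full_row_rank K" and v: "v = d + (\<Sum>i\<in>K. lam i *\<^sub>R brow i)"
    and d: "\<And>b. b \<in> K \<Longrightarrow> inner (brow b) d = 0"
  shows "Qmat K *v v = d"
proof -
  define N where "N = gram_inv K"
  have N: "is_gram_inverse K N" unfolding N_def by (rule is_gram_inverse_gram_inv[OF fr])
  have K: "finite K" by simp
  have brow_v: "inner (brow b) v = (\<Sum>c\<in>K. lam c * gram K b c)" if "b \<in> K" for b
    unfolding v using d[OF that] by (simp add: inner_add_right inner_sum_right gram_def)
  have coeff: "(\<Sum>b\<in>K. N a b * inner (brow b) v) = lam a" if "a \<in> K" for a
  proof -
    have "(\<Sum>b\<in>K. N a b * inner (brow b) v) = (\<Sum>b\<in>K. \<Sum>c\<in>K. lam c * (N a b * gram K b c))"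
      by (intro sum.cong refl) (simp add: brow_v sum_distrib_left mult_ac)
    also have "\<dots> = (\<Sum>c\<in>K. lam c * (\<Sum>b\<in>K. N a b * gram K b c))"
      by (subst sum.swap) (simp add: sum_distrib_left)
    also have "\<dots> = (\<Sum>c\<in>K. lam c * (if a = c then 1 else 0))"
      using N that unfolding is_gram_inverse_def by (intro sum.cong) auto
    also have "\<dots> = lam a" using that by (simp add: if_distrib cong: if_cong)
    finally show ?thesis .
  qed
  have "(\<Sum>j\<in>UNIV. (\<Sum>a\<in>K. \<Sum>b\<in>K. brow a $ i * N a b * brow b $ j) * v$j)
      = (\<Sum>a\<in>K. brow a $ i * (\<Sum>b\<in>K. N a b * inner (brow b) v))" for i
  proof -
    have "(\<Sum>j\<in>UNIV. (\<Sum>a\<in>K. \<Sum>b\<in>K. brow a $ i * N a b * brow b $ j) * v$j)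
        = (\<Sum>a\<in>K. \<Sum>b\<in>K. \<Sum>j\<in>UNIV. brow a $ i * N a b * brow b $ j * v$j)"
      by (simp add: sum_distrib_right sum.swap[of _ UNIV K] sum.swap[of _ UNIV K])
    then show ?thesis by (simp add: inner_vec_def sum_distrib_left mult.assoc)
  qed
  then have "(\<chi> i j. \<Sum>a\<in>K. \<Sum>b\<in>K. brow a $ i * N a b * brow b $ j) *v v = (\<Sum>a\<in>K. lam a *\<^sub>R brow a)"
    by (simp add: vec_eq_iff matrix_vector_mult_def sum_component coeff mult.commute cong: sum.cong)
  then have "Qmat K *v v = v - (\<Sum>a\<in>K. lam a *\<^sub>R brow a)"
    unfolding Qmat_def N_def[symmetric] by (simp add: matrix_vector_mult_diff_rdistrib)
  then show ?thesis using v by simp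
qed

lemma Qmat_mult_vec_KD:
  assumes "K \<in> KD v"
  shows "Qmat K *v v = PiD v"
proof -
  obtain lam where lam: "lam \<in> MD v" and supp: "{i. lam i \<noteq> 0} \<subseteq> K" and KI: "K \<subseteq> ID v"
    and fr: "full_row_rank K"
    using assms unfolding KD_def by blast
  have "BT lam = (\<Sum>i\<in>K. lam i *\<^sub>R brow i)"
    unfolding BT_def using KI supp by (intro sum.mono_neutral_right) (auto simp: ID_def)
  moreover have "PiD v - v + BT lam = 0" using lam unfolding MD_def by simp
  ultimately have "v = PiD v + (\<Sum>i\<in>K. lam i *\<^sub>R brow i)" by (simp add: algebra_simps)
  moreover have "inner (brow b) (PiD v) = 0" if "b \<in> K" for b using KI that unfolding ID_def by auto
  ultimately show ?thesis by (rule Qmat_mult_vec_orthogonal_decomp[OF fr])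
qed

section \<open>KKT multipliers of the projection onto the cone\<close>

definition upper_indicator :: "'n::{finite,linorder} \<Rightarrow> real^('n::{finite,linorder})" where
  "upper_indicator i = (\<chi> k. if k \<le> i then 1 else 0)"

lemma upper_indicator_in_Dset: "upper_indicator i \<in> Dset"
  unfolding Dset_iff upper_indicator_def by auto

lemma inner_upper_indicator: "inner u (upper_indicator i) = (\<Sum>k\<in>{..i}. u$k)"
proof -
  have "inner u (upper_indicator i) = (\<Sum>k\<in>UNIV. if k \<in> {..i} then u$k else 0)"
    unfolding inner_vec_def upper_indicator_def by (intro sum.cong) auto
  also have "\<dots> = (\<Sum>k\<in>{..i}. u$k)" by (rule sum.mono_neutral_cong_right) auto
  finally show ?thesis .
qed

text \<open>The multipliers are the prefix sums of the residual v - PiD v; their sign and complementary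
  slackness come from testing the variational inequality of the projection with the directions
  \<plusminus>upper_indicator i.\<close>

lemma PiD_residual_prefix_sum_nonpos: "(\<Sum>k\<in>{..i}. (v - PiD v)$k) \<le> 0"
  using PiD_variational_ineq[OF Dset_add[OF PiD_in_Dset upper_indicator_in_Dset], of v v i]
  by (simp add: inner_upper_indicator)

lemma PiD_residual_sum_eq_0: "(\<Sum>k\<in>UNIV. (v - PiD v)$k) = 0"
proof -
  have "(\<chi> k. c) \<in> Dset" for c :: real by (simp add: Dset_iff)
  from PiD_variational_ineq[OF Dset_add[OF PiD_in_Dset this], of v v] this
  have "inner (v - PiD v) (\<chi> k. 1) \<le> 0" "inner (v - PiD v) (\<chi> k. -1) \<le> 0" by simp_all
  then show ?thesis by (simp add: inner_vec_def sum_negf sum_subtractf)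
qed

lemma PiD_residual_prefix_sum_eq_0:
  assumes i: "i \<in> Brows" and gap: "PiD v $ succ_idx i < PiD v $ i"
  shows "(\<Sum>k\<in>{..i}. (v - PiD v)$k) = 0"
proof -
  define d where "d = PiD v"
  define t where "t = d$i - d$succ_idx i"
  have d_mono: "\<And>a b. a \<le> b \<Longrightarrow> d$b \<le> d$a" using PiD_in_Dset unfolding Dset_iff d_def by blast
  \<comment> \<open>lowering the first block of d by the gap t keeps it in the cone\<close>
  have "d - t *\<^sub>R upper_indicator i \<in> Dset" unfolding Dset_iff
  proof (intro allI impI)
    fix k l :: 'a assume "k \<le> l"
    show "(d - t *\<^sub>R upper_indicator i) $ l \<le> (d - t *\<^sub>R upper_indicator i) $ k"
    proof (cases "k \<le> i \<and> \<not> l \<le> i")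
      case True
      then have "d$l \<le> d$succ_idx i" "d$i \<le> d$k" using succ_idx_le[of i l] d_mono by auto
      then show ?thesis using True unfolding upper_indicator_def t_def by simp
    qed (use \<open>k \<le> l\<close> d_mono in \<open>auto simp: upper_indicator_def\<close>)
  qed
  from PiD_variational_ineq[OF this, of v]
  have "0 \<le> t * (\<Sum>k\<in>{..i}. (v - d)$k)" by (simp add: d_def inner_upper_indicator)
  moreover have "t > 0" using gap unfolding t_def d_def by simp
  ultimately have "(\<Sum>k\<in>{..i}. (v - d)$k) \<ge> 0" by (simp add: zero_le_mult_iff)
  then show ?thesis using PiD_residual_prefix_sum_nonpos[of v i] unfolding d_def by linarith
qed

lemma Max_less_succ_idx:
  fixes j :: "'n::{finite,linorder}"
  assumes "\<exists>i. i < j"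
  defines "p \<equiv> Max {i. i < j}"
  shows "p \<in> Brows" and "{..p} = {..<j}" and "\<And>i. i \<in> Brows \<Longrightarrow> succ_idx i = j \<longleftrightarrow> i = p"
proof -
  have p_less: "p < j" unfolding p_def using Max_in[of "{i. i < j}"] assms by auto
  have p_max: "\<And>i. i < j \<Longrightarrow> i \<le> p" unfolding p_def by (intro Max_ge) auto
  show "p \<in> Brows" using p_less unfolding Brows_def by auto
  show "{..p} = {..<j}" using p_less p_max by (auto intro: le_less_trans)
  fix i :: 'n assume i: "i \<in> Brows"
  show "succ_idx i = j \<longleftrightarrow> i = p"
  proof
    assume "succ_idx i = j"
    then show "i = p" using succ_idx_gt[OF i] p_max[of i] succ_idx_le[of i p] p_less by force
  next
    assume "i = p"
    then show "succ_idx i = j"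
      using succ_idx_le[OF p_less] p_max[of "succ_idx p"] succ_idx_gt[OF \<open>p \<in> Brows\<close>] by force
  qed
qed

lemma sum_Brows_succ_idx_prefix_sums:
  fixes u :: "real^('n::{finite,linorder})"
  shows "(\<Sum>i\<in>Brows. if succ_idx i = j then (\<Sum>k\<in>{..i}. u$k) else 0) = (\<Sum>k\<in>{..<j}. u$k)"
proof (cases "\<exists>i. i < j")
  case True
  note p = Max_less_succ_idx[OF True]
  then have "(\<Sum>i\<in>Brows. if succ_idx i = j then (\<Sum>k\<in>{..i}. u$k) else 0)
      = (\<Sum>k\<in>{..Max {i. i < j}}. u$k)"
    by (simp add: sum.delta' cong: sum.cong)
  then show ?thesis unfolding p(2) .
next
  case False
  then have "{..<j} = {}" by auto
  moreover have "(\<Sum>i\<in>Brows. if succ_idx i = j then (\<Sum>k\<in>{..i}. u$k) else 0) = 0"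
    using False succ_idx_gt by (intro sum.neutral) auto
  ultimately show ?thesis by simp
qed

lemma BT_prefix_sums:
  fixes u :: "real^('n::{finite,linorder})"
  assumes total: "(\<Sum>k\<in>UNIV. u$k) = 0"
  defines "L i \<equiv> (\<Sum>k\<in>{..i}. u$k)"
  shows "BT (\<lambda>i. if i \<in> Brows then L i else 0) = u"
proof (subst vec_eq_iff, intro allI)
  fix j :: 'n
  have L_max: "L j = 0" if "j \<notin> Brows"
  proof -
    have "{..j} = UNIV" using that unfolding Brows_def by (auto simp: not_less)
    then show ?thesis unfolding L_def using total by simp
  qed
  have "BT (\<lambda>i. if i \<in> Brows then L i else 0) $ j = (\<Sum>i\<in>Brows. L i * brow i $ j)"
    unfolding BT_def sum_component by simp
  also have "\<dots> = (\<Sum>i\<in>Brows. (if i = j then L i else 0) - (if succ_idx i = j then L i else 0))"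
  proof (intro sum.cong refl)
    fix i :: 'n assume "i \<in> Brows"
    then have "succ_idx i \<noteq> i" using succ_idx_gt by force
    then show "L i * brow i $ j = (if i = j then L i else 0) - (if succ_idx i = j then L i else 0)"
      by (auto simp: brow_nth)
  qed
  also have "\<dots> = L j - (\<Sum>k\<in>{..<j}. u$k)"
    using L_max sum_Brows_succ_idx_prefix_sums[of j u] unfolding L_def
    by (cases "j \<in> Brows") (simp_all add: sum_subtractf sum.delta')
  also have "\<dots> = u$j"
  proof -
    have "{..j} = insert j {..<j}" by auto
    then show ?thesis unfolding L_def by simp
  qed
  finally show "BT (\<lambda>i. if i \<in> Brows then L i else 0) $ j = u $ j" .
qed

lemma ID_in_KD: "ID v \<in> KD v"
proof -
  define L where "L i = (\<Sum>k\<in>{..i}. (v - PiD v)$k)" for i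
  define lam where "lam i = (if i \<in> Brows then L i else 0)" for i
  have active: "brow i \<bullet> PiD v = 0" if i: "i \<in> Brows" and "L i \<noteq> 0" for i
  proof -
    have "\<not> PiD v $ succ_idx i < PiD v $ i"
      using PiD_residual_prefix_sum_eq_0[OF i] \<open>L i \<noteq> 0\<close> unfolding L_def by blast
    moreover have "PiD v $ succ_idx i \<le> PiD v $ i"
      using inner_brow_nonneg[OF PiD_in_Dset i] by (simp add: inner_brow[OF i])
    ultimately show ?thesis by (simp add: inner_brow[OF i])
  qed
  have "lam \<in> MD v"
    unfolding MD_def
  proof (intro CollectI conjI ballI allI impI)
    show "PiD v - v + BT lam = 0"
      unfolding lam_def L_def BT_prefix_sums[OF PiD_residual_sum_eq_0] by simp
    show "lam i \<le> 0" if "i \<in> Brows" for i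
      using that PiD_residual_prefix_sum_nonpos[of v i] by (simp add: lam_def L_def)
    show "(\<Sum>i\<in>Brows. lam i * (brow i \<bullet> PiD v)) = 0"
      using active by (intro sum.neutral) (auto simp: lam_def)
  qed (auto simp: lam_def inner_brow_nonneg[OF PiD_in_Dset])
  moreover have "{i. lam i \<noteq> 0} \<subseteq> ID v"
    using active unfolding lam_def ID_def by (auto split: if_splits)
  moreover have "full_row_rank (ID v)" by (rule full_row_rank_subset_Brows) (auto simp: ID_def)
  ultimately show ?thesis unfolding KD_def by blast
qed

section \<open>Piecewise affine maps\<close>

lemma eventually_active_pieces:
  fixes F :: "real^'n \<Rightarrow> real^'m" and A :: "((real^'n^'m) \<times> (real^'m)) set"
  assumes cont: "continuous_on UNIV F" and fin: "finite A"
  shows "\<forall>\<^sub>F \<Delta> in at 0. \<forall>(M, c)\<in>A. F (x + \<Delta>) = M *v (x + \<Delta>) + c \<longrightarrow> F x = M *v x + c"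
  unfolding case_prod_unfold
proof (rule eventually_ball_finite[OF fin], intro ballI)
  fix p assume "p \<in> A"
  define g where "g \<Delta> = F (x + \<Delta>) - (fst p *v (x + \<Delta>) + snd p)" for \<Delta>
  have "continuous_on UNIV (\<lambda>z. fst p *v z)"
    by (intro linear_continuous_on matrix_vector_mul_bounded_linear)
  then have "continuous_on UNIV g" unfolding g_def
    by (intro continuous_intros continuous_on_compose2[OF cont] continuous_on_compose2[of UNIV "\<lambda>z. fst p *v z"]) auto
  then have "(g \<longlongrightarrow> g 0) (at 0)" by (simp add: continuous_on_eq_continuous_at isCont_def)
  then have "g 0 \<noteq> 0 \<Longrightarrow> \<forall>\<^sub>F \<Delta> in at 0. g \<Delta> \<noteq> 0" by (rule tendsto_imp_eventually_ne)
  then show "\<forall>\<^sub>F \<Delta> in at 0. F (x + \<Delta>) = fst p *v (x + \<Delta>) + snd p \<longrightarrow> F x = fst p *v x + snd p"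
    by (cases "g 0 = 0") (auto simp: g_def elim: eventually_mono)
qed

lemma piecewise_affine_linearization_eventually_exact:
  fixes F :: "real^'n \<Rightarrow> real^'m" and A :: "((real^'n^'m) \<times> (real^'m)) set"
  assumes cont: "continuous_on UNIV F" and fin: "finite A"
    and pieces: "\<And>y V. V \<in> \<V> y \<Longrightarrow> \<exists>c. (V, c) \<in> A \<and> F y = V *v y + c"
  shows "\<forall>\<^sub>F \<Delta> in at 0. \<forall>V \<in> \<V> (x + \<Delta>). F (x + \<Delta>) - F x - V *v \<Delta> = 0"
  using eventually_active_pieces[OF cont fin, of x]
proof eventually_elim
  case (elim \<Delta>)
  show ?case
  proof
    fix V assume "V \<in> \<V> (x + \<Delta>)"
    then obtain c where "(V, c) \<in> A" and c: "F (x + \<Delta>) = V *v (x + \<Delta>) + c" using pieces by blast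
    then have "F x = V *v x + c" using elim by blast
    then show "F (x + \<Delta>) - F x - V *v \<Delta> = 0" using c by (simp add: matrix_vector_right_distrib)
  qed
qed

lemma continuous_finite_range_convergent_at_right:
  fixes h :: "real \<Rightarrow> 'a::real_normed_vector"
  assumes "\<delta> > 0" and "continuous_on {0<..<\<delta>} h" and "finite (h ` {0<..<\<delta>})"
  shows "\<exists>k. (h \<longlongrightarrow> k) (at_right 0)"
proof -
  have "connected (h ` {0<..<\<delta>})" using assms(2) by (rule connected_continuous_image) simp
  moreover have "h ` {0<..<\<delta>} \<noteq> {}" using assms(1) by simp
  ultimately obtain k where k: "h ` {0<..<\<delta>} = {k}" using assms(3) connected_finite_iff_sing by blast
  have "\<forall>\<^sub>F t in at_right 0. h t = k"
    unfolding eventually_at_right_field using assms(1) k by (intro exI[of _ \<delta>]) auto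
  then show ?thesis using tendsto_eventually by blast
qed

text \<open>Along a ray the difference quotient takes values in the finite set of slopes M d, and is
  continuous, so it is eventually constant.\<close>

lemma piecewise_affine_dir_differentiable:
  fixes F :: "real^'n \<Rightarrow> real^'n" and A :: "((real^'n^'n) \<times> (real^'n)) set"
  assumes cont: "continuous_on UNIV F" and fin: "finite A"
    and cover: "\<And>y. \<exists>(M, c)\<in>A. F y = M *v y + c"
  shows "dir_differentiable F x"
  unfolding dir_differentiable_def
proof
  fix d :: "real^'n"
  define h where "h t = (1 / t) *\<^sub>R (F (x + t *\<^sub>R d) - F x)" for t :: real
  show "\<exists>L. ((\<lambda>t. (1 / t) *\<^sub>R (F (x + t *\<^sub>R d) - F x)) \<longlongrightarrow> L) (at_right 0)"
  proof (cases "d = 0")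
    case False
    then have nd: "norm d > 0" by simp
    obtain \<epsilon> where \<epsilon>: "\<epsilon> > 0" and active: "\<And>\<Delta>. \<Delta> \<noteq> 0 \<Longrightarrow> dist \<Delta> 0 < \<epsilon> \<Longrightarrow>
        \<forall>(M, c)\<in>A. F (x + \<Delta>) = M *v (x + \<Delta>) + c \<longrightarrow> F x = M *v x + c"
      using eventually_active_pieces[OF cont fin, of x] unfolding eventually_at by auto
    define \<delta> where "\<delta> = \<epsilon> / norm d"
    have \<delta>: "\<delta> > 0" unfolding \<delta>_def using \<epsilon> nd by simp
    have slope: "h t \<in> (\<lambda>(M, c). M *v d) ` A" if t: "0 < t" "t < \<delta>" for t
    proof -
      obtain M c where Mc: "(M, c) \<in> A" "F (x + t *\<^sub>R d) = M *v (x + t *\<^sub>R d) + c" using cover by blast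
      have "dist (t *\<^sub>R d) 0 < \<delta> * norm d" using t nd by simp
      then have "F x = M *v x + c"
        using active[of "t *\<^sub>R d"] Mc t False unfolding \<delta>_def using nd by auto
      then have "h t = M *v d"
        unfolding h_def using Mc(2) t by (simp add: matrix_vector_right_distrib matrix_vector_mult_scaleR)
      then show ?thesis using Mc(1) by force
    qed
    have "continuous_on {0<..<\<delta>} h" unfolding h_def
      by (intro continuous_intros continuous_on_compose2[OF cont]) auto
    moreover have "finite (h ` {0<..<\<delta>})"
      by (rule finite_subset[OF _ finite_imageI[OF fin]]) (use slope in auto)
    ultimately show ?thesis
      using continuous_finite_range_convergent_at_right[OF \<delta>] unfolding h_def by blast
  qed (auto intro: tendsto_const)
qed

section \<open>The affine pieces of the proximal map\<close>

lemma prox_pen_clust_eq: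
  assumes "\<rho> \<ge> 0" and P: "is_perm_mat P" and sorted: "nonincreasing (P *v y)"
  shows "prox (pen_clust \<rho>) y = transpose P *v PiD (P *v y - \<rho> *\<^sub>R wvec)"
proof -
  obtain \<sigma> where \<sigma>: "\<sigma> permutes UNIV" and "\<And>x. P *v x = permute_vec \<sigma> x"
    and "\<And>x. transpose P *v x = permute_vec (inv \<sigma>) x"
    using perm_mat_mult_vec[OF P] by blast
  then show ?thesis
    using prox_pen_p_eq[of 0 \<rho> \<sigma> y] assms sorted by (simp add: pen_clust_eq_pen_p)
qed

lemma prox_pen_p_eq_soft_threshold:
  assumes "\<beta> \<ge> 0" "\<rho> \<ge> 0" and P: "is_perm_mat P" and sorted: "nonincreasing (P *v y)"
  shows "prox (pen_p \<beta> \<rho>) y = soft_threshold_vec \<beta> (prox (pen_clust \<rho>) y)"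
proof -
  obtain \<sigma> where \<sigma>: "\<sigma> permutes UNIV" and "\<And>x. P *v x = permute_vec \<sigma> x"
    and "\<And>x. transpose P *v x = permute_vec (inv \<sigma>) x"
    using perm_mat_mult_vec[OF P] by blast
  then show ?thesis
    using prox_pen_p_eq[OF assms(1,2) \<sigma>] prox_pen_clust_eq[OF assms(2) P sorted] sorted
    by (simp add: soft_threshold_vec_permute_vec)
qed

definition sgn_vec :: "real^'n \<Rightarrow> real^'n" where
  "sgn_vec x = (\<chi> i. sgn (x$i))"

lemma soft_threshold_vec_dB_prox_l1:
  assumes "\<beta> > 0" and "\<Theta> \<in> dB_prox_l1 \<beta> \<eta>"
  shows "soft_threshold_vec \<beta> \<eta> = \<Theta> *v \<eta> - \<beta> *\<^sub>R (\<Theta> *v sgn_vec \<eta>)"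
proof -
  obtain q where \<Theta>: "\<Theta> = diag_mat q" and q: "\<And>i. (\<bar>\<eta>$i\<bar> < \<beta> \<longrightarrow> q i = 0) \<and>
      (\<bar>\<eta>$i\<bar> = \<beta> \<longrightarrow> q i \<in> {0,1}) \<and> (\<bar>\<eta>$i\<bar> > \<beta> \<longrightarrow> q i = 1)"
    using assms(2) unfolding dB_prox_l1_def by blast
  have diag: "(diag_mat q *v x) $ i = q i * x $ i" for x :: "real^'a" and i
    by (simp add: diag_mat_def matrix_vector_mult_def if_distrib if_distribR cong: if_cong)
  have "soft_threshold \<beta> (\<eta>$i) = q i * \<eta>$i - \<beta> * (q i * sgn (\<eta>$i))" for i
    using q[of i] assms(1) unfolding soft_threshold_def
    by (cases "\<bar>\<eta>$i\<bar> < \<beta>"; cases "\<bar>\<eta>$i\<bar> = \<beta>") (auto simp: max_def sgn_if abs_if)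
  then show ?thesis unfolding \<Theta> by (simp add: vec_eq_iff diag sgn_vec_def)
qed

lemma dB_prox_l1_nonempty: "dB_prox_l1 \<beta> \<eta> \<noteq> {}"
  unfolding dB_prox_l1_def
  by (auto intro!: exI[of _ "\<lambda>i. if \<bar>\<eta>$i\<bar> \<ge> \<beta> then 1 else 0"])

definition zero_one_matrices :: "(real^'n^'n) set" where
  "zero_one_matrices = {M. \<forall>i j. M$i$j \<in> {0,1}}"

definition sign_vectors :: "(real^'n) set" where
  "sign_vectors = {s. \<forall>i. s$i \<in> {-1,0,1}}"

lemma dB_prox_l1_zero_one: "\<Theta> \<in> dB_prox_l1 \<beta> \<eta> \<Longrightarrow> \<Theta> \<in> zero_one_matrices"
proof -
  assume "\<Theta> \<in> dB_prox_l1 \<beta> \<eta>"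
  then obtain q where \<Theta>: "\<Theta> = diag_mat q" and q: "\<And>i. (\<bar>\<eta>$i\<bar> < \<beta> \<longrightarrow> q i = 0) \<and>
      (\<bar>\<eta>$i\<bar> = \<beta> \<longrightarrow> q i \<in> {0,1}) \<and> (\<bar>\<eta>$i\<bar> > \<beta> \<longrightarrow> q i = 1)"
    unfolding dB_prox_l1_def by blast
  have "q i \<in> {0,1}" for i using q[of i] by (cases rule: linorder_cases[of "\<bar>\<eta>$i\<bar>" \<beta>]) auto
  then show ?thesis unfolding \<Theta> zero_one_matrices_def diag_mat_def by auto
qed

lemma finite_vec_range: "finite S \<Longrightarrow> finite {x::'a^('n::finite). \<forall>i. x$i \<in> S}"
proof -
  assume S: "finite S"
  have "{x::'a^'n. \<forall>i. x$i \<in> S} \<subseteq> vec_lambda ` (PiE UNIV (\<lambda>_. S))"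
  proof
    fix x :: "'a^'n" assume "x \<in> {x. \<forall>i. x$i \<in> S}"
    then have "vec_nth x \<in> PiE UNIV (\<lambda>_. S)" by (auto simp: PiE_UNIV_domain)
    then show "x \<in> vec_lambda ` (PiE UNIV (\<lambda>_. S))" by (metis image_eqI vec_nth_inverse)
  qed
  moreover have "finite (PiE (UNIV::'n set) (\<lambda>_. S))" using S by (intro finite_PiE) auto
  ultimately show ?thesis by (meson finite_imageI finite_subset)
qed

lemma finite_zero_one_matrices: "finite (zero_one_matrices :: (real^('n::finite)^'n) set)"
proof -
  have eq: "zero_one_matrices = {M :: real^'n^'n. \<forall>i. M$i \<in> {x. \<forall>j. x$j \<in> {0,1}}}"
    unfolding zero_one_matrices_def by auto
  show ?thesis unfolding eq by (intro finite_vec_range) auto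
qed

lemma finite_sign_vectors: "finite (sign_vectors :: (real^('n::finite)) set)"
  unfolding sign_vectors_def by (intro finite_vec_range) auto

definition prox_pen_p_pieces ::
    "real \<Rightarrow> real \<Rightarrow> ((real^('n::{finite,linorder})^('n::{finite,linorder})) \<times> (real^('n::{finite,linorder}))) set" where
  "prox_pen_p_pieces \<beta> \<rho> = (\<lambda>(\<Theta>, P, K, s). (\<Theta> ** (transpose P ** Qmat K ** P),
      - (\<rho> *\<^sub>R (\<Theta> *v (transpose P *v (Qmat K *v wvec)))) - \<beta> *\<^sub>R (\<Theta> *v s)))
    ` (zero_one_matrices \<times> zero_one_matrices \<times> UNIV \<times> sign_vectors)"

lemma finite_prox_pen_p_pieces: "finite (prox_pen_p_pieces \<beta> \<rho>)"
  unfolding prox_pen_p_pieces_def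
  by (intro finite_imageI finite_cartesian_product finite_zero_one_matrices finite_sign_vectors) simp

lemma prox_pen_p_affine_piece:
  fixes y :: "real^('n::{finite,linorder})"
  assumes \<beta>: "\<beta> > 0" and \<rho>: "\<rho> > 0" and P: "is_perm_mat P" and sorted: "nonincreasing (P *v y)"
    and \<Theta>: "\<Theta> \<in> dB_prox_l1 \<beta> (prox (pen_clust \<rho>) y)" and K: "K \<in> KD (P *v y - \<rho> *\<^sub>R wvec)"
  defines "V \<equiv> \<Theta> ** (transpose P ** Qmat K ** P)"
  shows "\<exists>c. (V, c) \<in> prox_pen_p_pieces \<beta> \<rho> \<and> prox (pen_p \<beta> \<rho>) y = V *v y + c"
proof -
  define \<eta> where "\<eta> = prox (pen_clust \<rho>) y"
  define c where "c = - (\<rho> *\<^sub>R (\<Theta> *v (transpose P *v (Qmat K *v wvec)))) - \<beta> *\<^sub>R (\<Theta> *v sgn_vec \<eta>)"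
  have "\<eta> = transpose P *v (Qmat K *v (P *v y - \<rho> *\<^sub>R wvec))"
    unfolding \<eta>_def prox_pen_clust_eq[OF less_imp_le[OF \<rho>] P sorted] Qmat_mult_vec_KD[OF K] ..
  then have lin: "\<Theta> *v \<eta> = V *v y - \<rho> *\<^sub>R (\<Theta> *v (transpose P *v (Qmat K *v wvec)))"
    unfolding V_def by (simp add: matrix_vector_mult_diff_distrib matrix_vector_mult_scaleR
        matrix_vector_mul_assoc matrix_mul_assoc)
  have "prox (pen_p \<beta> \<rho>) y = \<Theta> *v \<eta> - \<beta> *\<^sub>R (\<Theta> *v sgn_vec \<eta>)"
    using prox_pen_p_eq_soft_threshold[OF less_imp_le[OF \<beta>] less_imp_le[OF \<rho>] P sorted]
      soft_threshold_vec_dB_prox_l1[OF \<beta> \<Theta>] unfolding \<eta>_def by simp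
  also have "\<dots> = V *v y + c" unfolding lin c_def by (simp add: algebra_simps)
  finally have "prox (pen_p \<beta> \<rho>) y = V *v y + c" .
  moreover have "\<Theta> \<in> zero_one_matrices" "P \<in> zero_one_matrices" "sgn_vec \<eta> \<in> sign_vectors"
    using dB_prox_l1_zero_one[OF \<Theta>] P
    unfolding is_perm_mat_def zero_one_matrices_def sign_vectors_def sgn_vec_def by (auto simp: sgn_if)
  then have "(V, c) \<in> prox_pen_p_pieces \<beta> \<rho>"
    unfolding prox_pen_p_pieces_def V_def c_def by (intro image_eqI[where x="(\<Theta>, P, K, sgn_vec \<eta>)"]) auto
  ultimately show ?thesis by blast
qed

theorem mainTheorem7:
  fixes \<beta> \<rho> \<gamma> :: real
    and Psel :: "real^('n::{finite,linorder}) \<Rightarrow> real^('n::{finite,linorder})^('n::{finite,linorder})"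
  assumes "\<beta> > 0" and "\<rho> > 0" and "\<gamma> > 0"
    and "\<forall>y. is_perm_mat (Psel y) \<and> nonincreasing (Psel y *v y)"
  shows "(\<forall>x::real^('n::{finite,linorder}). dir_differentiable (prox (pen_p \<beta> \<rho>)) x) \<and>
    (\<forall>x. \<exists>C. \<forall>\<^sub>F \<Delta> in at 0. \<forall>V \<in> Mset Psel \<beta> \<rho> (x + \<Delta>).
        norm (prox (pen_p \<beta> \<rho>) (x + \<Delta>) - prox (pen_p \<beta> \<rho>) x - V *v \<Delta>)
          \<le> C * norm \<Delta> powr (1 + \<gamma>))"
proof -
  note \<beta> = assms(1) and \<rho> = assms(2) and P = assms(4)[rule_format, THEN conjunct1]
    and sorted = assms(4)[rule_format, THEN conjunct2]
  have cont: "continuous_on UNIV (prox (pen_p \<beta> \<rho>))"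
    using \<beta> \<rho> by (intro continuous_on_prox_pen_p) auto
  have pieces: "\<exists>c. (V, c) \<in> prox_pen_p_pieces \<beta> \<rho> \<and> prox (pen_p \<beta> \<rho>) y = V *v y + c"
    if "V \<in> Mset Psel \<beta> \<rho> y" for y V
    using that prox_pen_p_affine_piece[OF \<beta> \<rho> P sorted] unfolding Mset_def QS_def QD_def by blast
  have cover: "\<exists>(V, c)\<in>prox_pen_p_pieces \<beta> \<rho>. prox (pen_p \<beta> \<rho>) y = V *v y + c"
    for y :: "real^('n::{finite,linorder})"
  proof -
    obtain \<Theta> where "\<Theta> \<in> dB_prox_l1 \<beta> (prox (pen_clust \<rho>) y)" using dB_prox_l1_nonempty by blast
    from prox_pen_p_affine_piece[OF \<beta> \<rho> P[of y] sorted[of y] this ID_in_KD] show ?thesis by blast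
  qed
  have exact: "\<forall>\<^sub>F \<Delta> in at 0. \<forall>V \<in> Mset Psel \<beta> \<rho> (x + \<Delta>).
      prox (pen_p \<beta> \<rho>) (x + \<Delta>) - prox (pen_p \<beta> \<rho>) x - V *v \<Delta> = 0" for x
    using cont finite_prox_pen_p_pieces pieces by (rule piecewise_affine_linearization_eventually_exact)
  have "\<forall>\<^sub>F \<Delta> in at 0. \<forall>V \<in> Mset Psel \<beta> \<rho> (x + \<Delta>).
      norm (prox (pen_p \<beta> \<rho>) (x + \<Delta>) - prox (pen_p \<beta> \<rho>) x - V *v \<Delta>) \<le> 0 * norm \<Delta> powr (1 + \<gamma>)"
    for x
    using exact[of x] by eventually_elim simp
  then show ?thesis
    using piecewise_affine_dir_differentiable[OF cont finite_prox_pen_p_pieces cover] by blast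
qed

end
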